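(* Let $n,k$ be integers with $2\le k\le n-1$, let $\varepsilon\in(0,1)$ and $\delta>0$, let $\gamma:=\frac{k(n-k)}{2n(n-1)}$, and let $$m:=\frac{12n(n-1)^2}{\varepsilon^2(n-k)^2k}\ln\frac{2n^2}{\delta}.$$ Let $\mathcal{I}=(I_1,\dots,I_m)$ be a sequence of $k$-element subsets of $[n]$ sampled independently and uniformly at random. Then with probability at least $1-\delta$ both of the following hold: (1) for every $i\in[n]$, $f_{ii}:=\frac{1}{m}|\{\ell: i\in I_\ell\}|\in\left[\frac{k}{n}-\varepsilon\gamma,\frac{k}{n}+\varepsilon\gamma\right]$; (2) for every pair of distinct $i,j\in[n]$, $f_{ij}:=\frac{1}{m}|\{\ell:\{i,j\}\subseteq I_\ell\}|\in\left[\frac{k(k-1)}{n(n-1)}-\varepsilon\gamma,\frac{k(k-1)}{n(n-1)}+\varepsilon\gamma\right]$.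
   Context: $[n]=\{1,\dots,n\}$. *)

theory Defs
  imports "HOL-Probability.Probability" "HOL-Probability.Product_PMF"
begin

definition ksubset_pmf :: "nat \<Rightarrow> nat \<Rightarrow> nat set pmf" where
  "ksubset_pmf n k = pmf_of_set {I. I \<subseteq> {1..n} \<and> card I = k}"

text \<open>m independent uniform samples I_0, ..., I_(m-1) (indices shifted to start at 0).\<close>
definition sample_pmf :: "nat \<Rightarrow> nat \<Rightarrow> nat \<Rightarrow> (nat \<Rightarrow> nat set) pmf" where
  "sample_pmf n k m = Pi_pmf {..<m} {} (\<lambda>_. ksubset_pmf n k)"

definition freq1 :: "nat \<Rightarrow> (nat \<Rightarrow> nat set) \<Rightarrow> nat \<Rightarrow> real" where
  "freq1 m I i = real (card {l \<in> {..<m}. i \<in> I l}) / real m"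

definition freq2 :: "nat \<Rightarrow> (nat \<Rightarrow> nat set) \<Rightarrow> nat \<Rightarrow> nat \<Rightarrow> real" where
  "freq2 m I i j = real (card {l \<in> {..<m}. {i, j} \<subseteq> I l}) / real m"

end

theory Submission
  imports Defs
begin

text \<open>
  For a fixed pair i, j the number of samples containing {i, j} is binomial with mean m q, where
  q = k/n if i = j and q = k(k-1)/(n(n-1)) otherwise; in both cases q \<le> k/n. The Chernoff bound
  gives P(|f_ij - q| > t) \<le> 2 exp(-m t^2 / (2q + t)). For t = \<epsilon>\<gamma> \<le> k/n the denominator is at most
  3k/n, and the choice of m makes the exponent at least ln(2n^2/\<delta>), so every pair fails with
  probability at most \<delta>/n^2, and a union bound over the n^2 pairs finishes the proof.
\<close>

lemma ln_one_plus_pade_lower_bound: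
  fixes x :: real
  assumes "0 \<le> x"
  shows "2 * x / (2 + x) \<le> ln (1 + x)"
proof -
  define g where "g y = ln (1 + y) - 2 * y / (2 + y)" for y :: real
  have "g 0 \<le> g x"
  proof (rule DERIV_nonneg_imp_nondecreasing[OF assms])
    fix y :: real
    assume y: "0 \<le> y" "y \<le> x"
    have "DERIV g y :> 1 / (1 + y) - 4 / (2 + y)^2"
      unfolding g_def using y
      by (auto intro!: derivative_eq_intros simp: field_simps power2_eq_square)
    moreover have "4 / (2 + y)^2 \<le> 1 / (1 + y)"
    proof -
      have "4 * (1 + y) \<le> (2 + y)^2"
        by (simp add: power2_eq_square algebra_simps)
      then show ?thesis
        using y by (simp add: divide_simps)
    qed
    ultimately show "\<exists>d. DERIV g y :> d \<and> 0 \<le> d"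
      by (metis diff_ge_0_iff_ge)
  qed
  then show ?thesis
    by (simp add: g_def)
qed

lemma exp_minus_le_taylor2:
  fixes x :: real
  assumes "0 \<le> x"
  shows "exp (- x) \<le> 1 - x + x^2 / 2"
proof -
  define g where "g y = 1 - y + y^2 / 2 - exp (- y)" for y :: real
  have "g 0 \<le> g x"
  proof (rule DERIV_nonneg_imp_nondecreasing[OF assms])
    fix y :: real
    have "DERIV g y :> y - 1 + exp (- y)"
      unfolding g_def by (auto intro!: derivative_eq_intros simp: field_simps)
    moreover have "0 \<le> y - 1 + exp (- y)"
      using exp_ge_add_one_self[of "- y"] by simp
    ultimately show "\<exists>d. DERIV g y :> d \<and> 0 \<le> d"
      by blast
  qed
  then show ?thesis
    by (simp add: g_def)
qed

lemma measure_pmf_prob_Ball_ge: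
  fixes M :: "'a pmf"
  assumes "finite X" and "\<And>x. x \<in> X \<Longrightarrow> measure_pmf.prob M {\<omega>. \<not> Q x \<omega>} \<le> b"
  shows "1 - real (card X) * b \<le> measure_pmf.prob M {\<omega>. \<forall>x\<in>X. Q x \<omega>}"
proof -
  have "measure_pmf.prob M (\<Union>x\<in>X. {\<omega>. \<not> Q x \<omega>}) \<le> (\<Sum>x\<in>X. measure_pmf.prob M {\<omega>. \<not> Q x \<omega>})"
    using assms(1) by (rule measure_pmf.finite_measure_subadditive_finite) auto
  also have "\<dots> \<le> real (card X) * b"
    using sum_mono[of X _ "\<lambda>_. b"] assms(2) by simp
  moreover have "{\<omega>. \<forall>x\<in>X. Q x \<omega>} = space M - (\<Union>x\<in>X. {\<omega>. \<not> Q x \<omega>})"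
    by auto
  ultimately show ?thesis
    using measure_pmf.prob_compl[of "\<Union>x\<in>X. {\<omega>. \<not> Q x \<omega>}" M] by simp
qed

definition count_hits :: "nat \<Rightarrow> 'a set \<Rightarrow> (nat \<Rightarrow> 'a) \<Rightarrow> nat" where
  "count_hits m A f = card {l \<in> {..<m}. f l \<in> A}"

lemma count_hits_le: "count_hits m A f \<le> m"
  unfolding count_hits_def using card_mono[of "{..<m}" "{l \<in> {..<m}. f l \<in> A}"] by auto

lemma exp_count_hits_eq_prod:
  "exp (s * real (count_hits m A f)) = (\<Prod>l<m. if f l \<in> A then exp s else 1)"
proof -
  have "s * real (count_hits m A f) = (\<Sum>l<m. if f l \<in> A then s else 0)"
    by (simp add: count_hits_def sum.If_cases Int_def conj_commute)
  then show ?thesis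
    by (simp add: exp_sum if_distrib cong: if_cong)
qed

lemma count_hits_mgf_le:
  "measure_pmf.expectation (Pi_pmf {..<m} d (\<lambda>_. Q)) (\<lambda>f. exp (s * real (count_hits m A f)))
     \<le> exp (real m * measure_pmf.prob Q A * (exp s - 1))"
proof -
  let ?p = "measure_pmf.prob Q A"
  let ?g = "\<lambda>v. if v \<in> A then exp s else 1"
  have "measure_pmf.expectation Q ?g = measure_pmf.expectation Q (\<lambda>v. 1 + (exp s - 1) * indicator A v)"
    by (intro Bochner_Integration.integral_cong) (auto simp: indicator_def)
  also have "\<dots> = 1 + ?p * (exp s - 1)"
  proof -
    have "integrable Q (\<lambda>v. indicator A v :: real)"
      by (rule measure_pmf.integrable_const_bound[where B = 1]) auto
    then show ?thesis
      by (simp add: measure_pmf.prob_space)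
  qed
  finally have factor_mean: "measure_pmf.expectation Q ?g = 1 + ?p * (exp s - 1)" .
  have "measure_pmf.expectation (Pi_pmf {..<m} d (\<lambda>_. Q)) (\<lambda>f. exp (s * real (count_hits m A f)))
      = (\<Prod>l<m. measure_pmf.expectation Q ?g)"
    unfolding exp_count_hits_eq_prod
    by (rule expectation_prod_Pi_pmf)
       (auto intro!: measure_pmf.integrable_const_bound[where B = "max (exp s) 1"])
  also have "\<dots> = (1 + ?p * (exp s - 1)) ^ m"
    by (simp add: factor_mean)
  also have "\<dots> \<le> exp (?p * (exp s - 1)) ^ m"
  proof (rule power_mono)
    have "0 \<le> 1 - ?p + ?p * exp s"
      by (simp add: measure_pmf.prob_le_1)
    then show "0 \<le> 1 + ?p * (exp s - 1)"
      by (simp add: algebra_simps)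
  qed simp
  also have "\<dots> = exp (real m * ?p * (exp s - 1))"
    by (simp add: exp_of_nat_mult[symmetric] mult.assoc)
  finally show ?thesis .
qed

lemma count_hits_exp_tail_le:
  "measure_pmf.prob (Pi_pmf {..<m} d (\<lambda>_. Q)) {f. s * a \<le> s * real (count_hits m A f)}
     \<le> exp (real m * measure_pmf.prob Q A * (exp s - 1) - s * a)"
proof -
  let ?P = "Pi_pmf {..<m} d (\<lambda>_. Q)"
  let ?u = "\<lambda>f. exp (s * real (count_hits m A f))"
  have "measure_pmf.prob ?P {f. s * a \<le> s * real (count_hits m A f)}
      = measure ?P {f \<in> space ?P. exp (s * a) \<le> ?u f}"
    by simp
  also have "\<dots> \<le> measure_pmf.expectation ?P ?u / exp (s * a)"
  proof (rule integral_Markov_inequality_measure[where A = UNIV])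
    have "s * real (count_hits m A f) \<le> \<bar>s\<bar> * real m" for f
      by (intro mult_mono) (auto simp: count_hits_le)
    then show "integrable ?P ?u"
      by (intro measure_pmf.integrable_const_bound[where B = "exp (\<bar>s\<bar> * real m)"]) auto
  qed auto
  also have "\<dots> \<le> exp (real m * measure_pmf.prob Q A * (exp s - 1)) / exp (s * a)"
    by (intro divide_right_mono count_hits_mgf_le) simp
  finally show ?thesis
    by (simp add: exp_diff)
qed

lemma count_hits_upper_tail:
  fixes Q :: "'a pmf" and A :: "'a set"
  defines "p \<equiv> measure_pmf.prob Q A"
  assumes "0 < p" "0 < t"
  shows "measure_pmf.prob (Pi_pmf {..<m} d (\<lambda>_. Q)) {f. real m * (p + t) \<le> real (count_hits m A f)}
           \<le> exp (- (real m * t^2 / (2 * p + t)))"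
proof -
  define s where "s = ln (1 + t / p)"
  have "0 \<le> s"
    using assms by (simp add: s_def)
  have exp_s: "exp s = 1 + t / p"
    using assms by (simp add: s_def add_pos_nonneg)
  have s_ge: "2 * t / (2 * p + t) \<le> s"
  proof -
    have "2 * (t / p) / (2 + t / p) = 2 * t / (2 * p + t)"
      using assms by (simp add: field_simps)
    then show ?thesis
      using ln_one_plus_pade_lower_bound[of "t / p"] assms by (simp add: s_def)
  qed
  have "real m * p * (exp s - 1) - s * (real m * (p + t)) = real m * t - s * (real m * (p + t))"
    using assms by (simp add: exp_s)
  also have "\<dots> \<le> real m * t - 2 * t / (2 * p + t) * (real m * (p + t))"
    using s_ge assms by (intro diff_left_mono mult_right_mono) auto
  also have "\<dots> = - (real m * t^2 / (2 * p + t))"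
    using assms by (simp add: field_simps power2_eq_square)
  finally have exponent: "real m * p * (exp s - 1) - s * (real m * (p + t)) \<le> - (real m * t^2 / (2 * p + t))" .
  have "measure_pmf.prob (Pi_pmf {..<m} d (\<lambda>_. Q)) {f. real m * (p + t) \<le> real (count_hits m A f)}
      \<le> measure_pmf.prob (Pi_pmf {..<m} d (\<lambda>_. Q)) {f. s * (real m * (p + t)) \<le> s * real (count_hits m A f)}"
    using \<open>0 \<le> s\<close> by (intro measure_pmf.finite_measure_mono) (auto intro: mult_left_mono)
  also have "\<dots> \<le> exp (real m * p * (exp s - 1) - s * (real m * (p + t)))"
    unfolding p_def by (rule count_hits_exp_tail_le)
  also have "\<dots> \<le> exp (- (real m * t^2 / (2 * p + t)))"
    using exponent by simp
  finally show ?thesis .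
qed

lemma count_hits_lower_tail:
  fixes Q :: "'a pmf" and A :: "'a set"
  defines "p \<equiv> measure_pmf.prob Q A"
  assumes "0 < p" "0 < t"
  shows "measure_pmf.prob (Pi_pmf {..<m} d (\<lambda>_. Q)) {f. real (count_hits m A f) \<le> real m * (p - t)}
           \<le> exp (- (real m * t^2 / (2 * p)))"
proof -
  define x where "x = t / p"
  have "0 \<le> x"
    using assms by (simp add: x_def)
  have "real m * p * (exp (- x) - 1) + x * (real m * (p - t))
      \<le> real m * p * (- x + x^2 / 2) + x * (real m * (p - t))"
    using exp_minus_le_taylor2[OF \<open>0 \<le> x\<close>] assms by (intro add_right_mono mult_left_mono) auto
  also have "\<dots> = - (real m * t^2 / (2 * p))"
    using assms by (simp add: x_def field_simps power2_eq_square)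
  finally have exponent: "real m * p * (exp (- x) - 1) + x * (real m * (p - t)) \<le> - (real m * t^2 / (2 * p))" .
  have "measure_pmf.prob (Pi_pmf {..<m} d (\<lambda>_. Q)) {f. real (count_hits m A f) \<le> real m * (p - t)}
      \<le> measure_pmf.prob (Pi_pmf {..<m} d (\<lambda>_. Q)) {f. - x * (real m * (p - t)) \<le> - x * real (count_hits m A f)}"
    using \<open>0 \<le> x\<close> by (intro measure_pmf.finite_measure_mono) (auto intro: mult_left_mono)
  also have "\<dots> \<le> exp (real m * p * (exp (- x) - 1) + x * (real m * (p - t)))"
    using count_hits_exp_tail_le[of m d Q "- x" "real m * (p - t)" A] by (simp add: p_def)
  also have "\<dots> \<le> exp (- (real m * t^2 / (2 * p)))"
    using exponent by simp
  finally show ?thesis .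
qed

lemma count_hits_deviation_prob_le:
  fixes Q :: "'a pmf" and A :: "'a set"
  defines "p \<equiv> measure_pmf.prob Q A"
  assumes "0 < p" "0 < t"
  shows "measure_pmf.prob (Pi_pmf {..<m} d (\<lambda>_. Q)) {f. real m * t \<le> \<bar>real (count_hits m A f) - real m * p\<bar>}
           \<le> 2 * exp (- (real m * t^2 / (2 * p + t)))"
proof -
  let ?P = "Pi_pmf {..<m} d (\<lambda>_. Q)"
  have "measure_pmf.prob ?P {f. real m * t \<le> \<bar>real (count_hits m A f) - real m * p\<bar>}
      \<le> measure_pmf.prob ?P ({f. real m * (p + t) \<le> real (count_hits m A f)}
                              \<union> {f. real (count_hits m A f) \<le> real m * (p - t)})"
    by (intro measure_pmf.finite_measure_mono) (auto simp: algebra_simps abs_if split: if_splits)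
  also have "\<dots> \<le> measure_pmf.prob ?P {f. real m * (p + t) \<le> real (count_hits m A f)}
                  + measure_pmf.prob ?P {f. real (count_hits m A f) \<le> real m * (p - t)}"
    by (rule measure_Un_le) auto
  also have "\<dots> \<le> exp (- (real m * t^2 / (2 * p + t))) + exp (- (real m * t^2 / (2 * p)))"
    using assms(2,3) unfolding p_def by (intro add_mono count_hits_upper_tail count_hits_lower_tail)
  also have "exp (- (real m * t^2 / (2 * p))) \<le> exp (- (real m * t^2 / (2 * p + t)))"
    using assms by (simp add: divide_left_mono)
  finally show ?thesis
    by simp
qed

lemma card_subsets_containing:
  assumes "finite U" "T \<subseteq> U" "card T \<le> k"
  shows "card {I. I \<subseteq> U \<and> card I = k \<and> T \<subseteq> I} = (card U - card T) choose (k - card T)"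
proof -
  have "finite T"
    using assms finite_subset by blast
  have "{I. I \<subseteq> U \<and> card I = k \<and> T \<subseteq> I} = (\<lambda>J. J \<union> T) ` {J. J \<subseteq> U - T \<and> card J = k - card T}"
  proof (intro equalityI subsetI)
    fix I
    assume I: "I \<in> {I. I \<subseteq> U \<and> card I = k \<and> T \<subseteq> I}"
    then have "card (I - T) = k - card T" "I = (I - T) \<union> T"
      using \<open>finite T\<close> by (auto simp: card_Diff_subset)
    then show "I \<in> (\<lambda>J. J \<union> T) ` {J. J \<subseteq> U - T \<and> card J = k - card T}"
      using I by blast
  next
    fix I
    assume "I \<in> (\<lambda>J. J \<union> T) ` {J. J \<subseteq> U - T \<and> card J = k - card T}"
    then obtain J where J: "J \<subseteq> U - T" "card J = k - card T" "I = J \<union> T"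
      by auto
    moreover have "finite J" "J \<inter> T = {}"
      using J \<open>finite U\<close> by (auto intro: finite_subset)
    ultimately have "card I = card J + card T"
      using \<open>finite T\<close> by (simp add: card_Un_disjoint)
    then show "I \<in> {I. I \<subseteq> U \<and> card I = k \<and> T \<subseteq> I}"
      using J assms by auto
  qed
  moreover have "inj_on (\<lambda>J. J \<union> T) {J. J \<subseteq> U - T \<and> card J = k - card T}"
    by (rule inj_onI) blast
  ultimately have "card {I. I \<subseteq> U \<and> card I = k \<and> T \<subseteq> I} = card {J. J \<subseteq> U - T \<and> card J = k - card T}"
    by (simp add: card_image)
  also have "\<dots> = card (U - T) choose (k - card T)"
    using assms by (simp add: n_subsets)
  finally show ?thesis
    using assms \<open>finite T\<close> by (simp add: card_Diff_subset)
qed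

lemma prob_ksubset_pmf_superset:
  assumes "k \<le> n" "T \<subseteq> {1..n}" "card T \<le> k"
  shows "measure_pmf.prob (ksubset_pmf n k) {J. T \<subseteq> J}
           = real ((n - card T) choose (k - card T)) / real (n choose k)"
proof -
  let ?S = "{I. I \<subseteq> {1..n} \<and> card I = k}"
  have "finite ?S"
    by (rule finite_subset[of _ "Pow {1..n}"]) auto
  moreover have "card ?S = n choose k"
    by (simp add: n_subsets)
  moreover have "?S \<noteq> {}"
    using calculation assms(1) by (metis card.empty zero_less_binomial_iff less_irrefl)
  moreover have "?S \<inter> {J. T \<subseteq> J} = {I. I \<subseteq> {1..n} \<and> card I = k \<and> T \<subseteq> I}"
    by auto
  ultimately show ?thesis
    unfolding ksubset_pmf_def using card_subsets_containing[of "{1..n}" T k] assms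
    by (simp add: measure_pmf_of_set)
qed

lemma prob_ksubset_pmf_mem:
  assumes "1 \<le> k" "k \<le> n" "i \<in> {1..n}"
  shows "measure_pmf.prob (ksubset_pmf n k) {J. i \<in> J} = real k / real n"
proof -
  have "real k * real (n choose k) = real n * real ((n - 1) choose (k - 1))"
    using assms times_binomial_minus1_eq[of k n] by (simp flip: of_nat_mult)
  moreover have "0 < n choose k" "0 < n"
    using assms by auto
  moreover have "measure_pmf.prob (ksubset_pmf n k) {J. i \<in> J} = real ((n - 1) choose (k - 1)) / real (n choose k)"
    using prob_ksubset_pmf_superset[of k n "{i}"] assms by simp
  ultimately show ?thesis
    by (simp add: frac_eq_eq ac_simps)
qed

lemma prob_ksubset_pmf_pair:
  assumes "2 \<le> k" "k \<le> n" "i \<in> {1..n}" "j \<in> {1..n}" "i \<noteq> j"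
  shows "measure_pmf.prob (ksubset_pmf n k) {J. {i, j} \<subseteq> J} = real (k * (k - 1)) / (real n * (real n - 1))"
proof -
  have "k * (n choose k) = n * ((n - 1) choose (k - 1))"
    using assms by (simp add: times_binomial_minus1_eq)
  moreover have "(k - 1) * ((n - 1) choose (k - 1)) = (n - 1) * ((n - 2) choose (k - 2))"
    using assms times_binomial_minus1_eq[of "k - 1" "n - 1"] by (simp add: numeral_2_eq_2)
  ultimately have "k * (k - 1) * (n choose k) = n * (n - 1) * ((n - 2) choose (k - 2))"
    by (metis mult.assoc mult.left_commute)
  moreover have "0 < n choose k" "1 < n"
    using assms by auto
  moreover have "real n - 1 = real (n - 1)"
    using \<open>1 < n\<close> by simp
  ultimately have "real (k * (k - 1)) * real (n choose k) = real n * (real n - 1) * real ((n - 2) choose (k - 2))"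
    by (metis of_nat_mult)
  moreover have "measure_pmf.prob (ksubset_pmf n k) {J. {i, j} \<subseteq> J} = real ((n - 2) choose (k - 2)) / real (n choose k)"
    using prob_ksubset_pmf_superset[of k n "{i, j}"] assms by (simp add: numeral_2_eq_2)
  ultimately show ?thesis
    using \<open>0 < n choose k\<close> \<open>1 < n\<close> by (simp add: frac_eq_eq ac_simps)
qed

lemma prob_ksubset_pmf_pair_bounds:
  assumes "2 \<le> k" "k \<le> n" "i \<in> {1..n}" "j \<in> {1..n}"
  shows "0 < measure_pmf.prob (ksubset_pmf n k) {J. {i, j} \<subseteq> J}"
    and "measure_pmf.prob (ksubset_pmf n k) {J. {i, j} \<subseteq> J} \<le> real k / real n"
proof -
  show "0 < measure_pmf.prob (ksubset_pmf n k) {J. {i, j} \<subseteq> J}"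
  proof (cases "i = j")
    case True
    then show ?thesis
      using prob_ksubset_pmf_mem[of k n i] assms by simp
  next
    case False
    then show ?thesis
      using prob_ksubset_pmf_pair[of k n i j] assms by simp
  qed
  have "measure_pmf.prob (ksubset_pmf n k) {J. {i, j} \<subseteq> J} \<le> measure_pmf.prob (ksubset_pmf n k) {J. i \<in> J}"
    by (rule measure_pmf.finite_measure_mono) auto
  then show "measure_pmf.prob (ksubset_pmf n k) {J. {i, j} \<subseteq> J} \<le> real k / real n"
    using prob_ksubset_pmf_mem[of k n i] assms by simp
qed

lemma freq2_eq_count_hits: "freq2 m I i j = real (count_hits m {J. {i, j} \<subseteq> J} I) / real m"
  by (simp add: freq2_def count_hits_def)

lemma freq1_eq_freq2: "freq1 m I i = freq2 m I i i"
  by (simp add: freq1_def freq2_def)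

lemma freq2_deviation_prob_le:
  fixes n k m i j :: nat and t :: real
  defines "q \<equiv> measure_pmf.prob (ksubset_pmf n k) {J. {i, j} \<subseteq> J}"
  assumes "0 < q" "0 < t"
  shows "measure_pmf.prob (sample_pmf n k m) {I. t < \<bar>freq2 m I i j - q\<bar>}
           \<le> 2 * exp (- (real m * t^2 / (2 * q + t)))"
proof (cases "m = 0")
  case True
  then show ?thesis
    by (simp add: True) (meson measure_pmf.prob_le_1 one_le_numeral order_trans)
next
  case False
  have "measure_pmf.prob (sample_pmf n k m) {I. t < \<bar>freq2 m I i j - q\<bar>}
      \<le> measure_pmf.prob (sample_pmf n k m)
           {I. real m * t \<le> \<bar>real (count_hits m {J. {i, j} \<subseteq> J} I) - real m * q\<bar>}"
  proof (intro measure_pmf.finite_measure_mono subsetI CollectI)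
    fix I
    let ?c = "real (count_hits m {J. {i, j} \<subseteq> J} I)"
    assume "I \<in> {I. t < \<bar>freq2 m I i j - q\<bar>}"
    then have "real m * t < real m * \<bar>?c / real m - q\<bar>"
      using False by (simp add: freq2_eq_count_hits)
    also have "\<dots> = \<bar>real m * (?c / real m - q)\<bar>"
      by (simp add: abs_mult)
    also have "\<dots> = \<bar>?c - real m * q\<bar>"
      using False by (simp add: right_diff_distrib)
    finally show "real m * t \<le> \<bar>?c - real m * q\<bar>"
      by simp
  qed simp
  also have "\<dots> \<le> 2 * exp (- (real m * t^2 / (2 * q + t)))"
    using assms(2,3) unfolding sample_pmf_def q_def by (rule count_hits_deviation_prob_le)
  finally show ?thesis .
qed

lemma sample_size_exponent_bound:
  fixes n k :: nat and \<epsilon> p L :: real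
  assumes "2 \<le> k" "k \<le> n - 1" "0 < \<epsilon>" "\<epsilon> < 1" "0 \<le> p" "p \<le> real k / real n"
  defines "\<gamma> \<equiv> real (k * (n - k)) / (2 * real n * (real n - 1))"
  defines "m \<equiv> nat \<lceil>12 * real n * (real n - 1)^2 / (\<epsilon>^2 * real (n - k)^2 * real k) * L\<rceil>"
  shows "L \<le> real m * (\<epsilon> * \<gamma>)^2 / (2 * p + \<epsilon> * \<gamma>)"
proof -
  define N K where "N = real n" and "K = real k"
  define t where "t = \<epsilon> * \<gamma>"
  define c where "c = 12 * N * (N - 1)^2 / (\<epsilon>^2 * (N - K)^2 * K)"
  have "k \<le> n" "3 \<le> N" "2 \<le> K" "K + 1 \<le> N"
    using assms(1,2) by (auto simp: N_def K_def)
  have \<gamma>_eq: "\<gamma> = K * (N - K) / (2 * N * (N - 1))"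
    using assms(2) by (simp add: \<gamma>_def N_def K_def of_nat_diff)
  have "0 < \<gamma>"
    unfolding \<gamma>_eq using \<open>3 \<le> N\<close> \<open>2 \<le> K\<close> \<open>K + 1 \<le> N\<close> by simp
  then have "0 < t"
    using assms(3) by (simp add: t_def)
  have "t \<le> \<gamma>"
    using assms(4) \<open>0 < \<gamma>\<close> by (simp add: t_def)
  also have "\<gamma> \<le> K / N"
    unfolding \<gamma>_eq using \<open>3 \<le> N\<close> \<open>2 \<le> K\<close> \<open>K + 1 \<le> N\<close> by (simp add: divide_simps)
  finally have denominator: "2 * p + t \<le> 3 * K / N"
    using assms(6) by (simp add: N_def K_def)
  have c_t: "c * t^2 = 3 * K / N"
    unfolding c_def t_def \<gamma>_eq using assms(3) \<open>3 \<le> N\<close> \<open>2 \<le> K\<close> \<open>K + 1 \<le> N\<close>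
    by (simp add: power2_eq_square divide_simps)
  have c_L: "c * L \<le> real m"
    unfolding m_def c_def N_def K_def of_nat_diff[OF \<open>k \<le> n\<close>] by (rule real_nat_ceiling_ge)
  have "L * (2 * p + t) \<le> real m * t^2"
  proof (cases "0 \<le> L")
    case True
    have "L * (2 * p + t) \<le> L * (c * t^2)"
      unfolding c_t using denominator True by (rule mult_left_mono)
    also have "\<dots> = (c * L) * t^2"
      by (simp add: ac_simps)
    also have "\<dots> \<le> real m * t^2"
      using c_L by (rule mult_right_mono) simp
    finally show ?thesis .
  next
    case False
    then have "L * (2 * p + t) \<le> 0"
      using assms(5) \<open>0 < t\<close> by (simp add: mult_nonpos_nonneg)
    also have "0 \<le> real m * t^2"
      by simp
    finally show ?thesis .
  qed
  then show ?thesis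
    using assms(5) \<open>0 < t\<close> by (simp add: t_def pos_le_divide_eq)
qed

lemma sample_freq2_deviation_prob_le:
  fixes n k i j :: nat and \<epsilon> \<delta> :: real
  assumes "2 \<le> k" "k \<le> n - 1" "0 < \<epsilon>" "\<epsilon> < 1" "0 < \<delta>" "i \<in> {1..n}" "j \<in> {1..n}"
  defines "\<gamma> \<equiv> real (k * (n - k)) / (2 * real n * (real n - 1))"
  defines "m \<equiv> nat \<lceil>12 * real n * (real n - 1)^2 / (\<epsilon>^2 * real (n - k)^2 * real k)
                     * ln (2 * real n ^ 2 / \<delta>)\<rceil>"
  defines "q \<equiv> measure_pmf.prob (ksubset_pmf n k) {J. {i, j} \<subseteq> J}"
  shows "measure_pmf.prob (sample_pmf n k m) {I. \<epsilon> * \<gamma> < \<bar>freq2 m I i j - q\<bar>} \<le> \<delta> / real n ^ 2"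
proof -
  have q: "0 < q" "q \<le> real k / real n"
    using prob_ksubset_pmf_pair_bounds[of k n i j] assms(1,2,6,7) by (auto simp: q_def)
  have "0 < \<gamma>"
    unfolding \<gamma>_def using assms(1,2) by (intro divide_pos_pos) auto
  have "measure_pmf.prob (sample_pmf n k m) {I. \<epsilon> * \<gamma> < \<bar>freq2 m I i j - q\<bar>}
      \<le> 2 * exp (- (real m * (\<epsilon> * \<gamma>)^2 / (2 * q + \<epsilon> * \<gamma>)))"
    unfolding q_def by (rule freq2_deviation_prob_le) (use q \<open>0 < \<gamma>\<close> assms(3) in \<open>simp_all add: q_def\<close>)
  also have "\<dots> \<le> 2 * exp (- ln (2 * real n ^ 2 / \<delta>))"
    using sample_size_exponent_bound[of k n \<epsilon> q "ln (2 * real n ^ 2 / \<delta>)"] q assms(1-4)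
    unfolding \<gamma>_def m_def by simp
  also have "\<dots> = \<delta> / real n ^ 2"
    using assms(5,6) by (simp add: exp_minus)
  finally show ?thesis .
qed

lemma freq_bounds_of_pair_deviations:
  fixes n k m :: nat and I :: "nat \<Rightarrow> nat set" and t :: real
  assumes "2 \<le> k" "k \<le> n"
    and close: "\<forall>(i, j) \<in> {1..n} \<times> {1..n}.
                  \<bar>freq2 m I i j - measure_pmf.prob (ksubset_pmf n k) {J. {i, j} \<subseteq> J}\<bar> \<le> t"
  shows "\<forall>i\<in>{1..n}. freq1 m I i \<in> {real k / real n - t .. real k / real n + t}"
    and "\<forall>i\<in>{1..n}. \<forall>j\<in>{1..n}. i \<noteq> j \<longrightarrow>
           freq2 m I i j \<in> {real (k * (k - 1)) / (real n * (real n - 1)) - t ..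
                            real (k * (k - 1)) / (real n * (real n - 1)) + t}"
proof safe
  fix i
  assume "i \<in> {1..n}"
  then have "\<bar>freq2 m I i i - measure_pmf.prob (ksubset_pmf n k) {J. {i, i} \<subseteq> J}\<bar> \<le> t"
    using close by blast
  then show "freq1 m I i \<in> {real k / real n - t .. real k / real n + t}"
    using prob_ksubset_pmf_mem[of k n i] assms(1,2) \<open>i \<in> {1..n}\<close>
    by (simp add: freq1_eq_freq2 abs_diff_le_iff)
next
  fix i j
  assume ij: "i \<in> {1..n}" "j \<in> {1..n}" "i \<noteq> j"
  then have "\<bar>freq2 m I i j - measure_pmf.prob (ksubset_pmf n k) {J. {i, j} \<subseteq> J}\<bar> \<le> t"
    using close by blast
  then show "freq2 m I i j \<in> {real (k * (k - 1)) / (real n * (real n - 1)) - t ..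
                                real (k * (k - 1)) / (real n * (real n - 1)) + t}"
    using prob_ksubset_pmf_pair[OF assms(1,2) ij] by (simp add: abs_diff_le_iff)
qed

theorem lemma9:
  fixes n k :: nat and \<epsilon> \<delta> :: real
  assumes "2 \<le> k" "k \<le> n - 1"
    and "0 < \<epsilon>" "\<epsilon> < 1" and "0 < \<delta>"
  defines "\<gamma> \<equiv> real (k * (n - k)) / (2 * real n * (real n - 1))"
  defines "m \<equiv> nat \<lceil>12 * real n * (real n - 1)^2 / (\<epsilon>^2 * real (n - k)^2 * real k)
                     * ln (2 * real n ^ 2 / \<delta>)\<rceil>"
  shows "measure_pmf.prob (sample_pmf n k m)
           {I. (\<forall>i\<in>{1..n}. freq1 m I i \<in> {real k / real n - \<epsilon> * \<gamma> .. real k / real n + \<epsilon> * \<gamma>})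
             \<and> (\<forall>i\<in>{1..n}. \<forall>j\<in>{1..n}. i \<noteq> j \<longrightarrow>
                  freq2 m I i j \<in> {real (k * (k - 1)) / (real n * (real n - 1)) - \<epsilon> * \<gamma> ..
                                   real (k * (k - 1)) / (real n * (real n - 1)) + \<epsilon> * \<gamma>})}
         \<ge> 1 - \<delta>"
  (is "measure_pmf.prob _ ?good \<ge> _")
proof -
  \<comment> \<open>The diagonal pairs (i, i) stand for the frequencies f_ii, since {i, i} = {i}.\<close>
  let ?close = "\<lambda>(i, j) I. \<bar>freq2 m I i j - measure_pmf.prob (ksubset_pmf n k) {J. {i, j} \<subseteq> J}\<bar> \<le> \<epsilon> * \<gamma>"
  have "0 < n"
    using assms(1,2) by simp
  have "1 - real (card ({1..n} \<times> {1..n})) * (\<delta> / real n ^ 2)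
      \<le> measure_pmf.prob (sample_pmf n k m) {I. \<forall>x \<in> {1..n} \<times> {1..n}. ?close x I}"
  proof (rule measure_pmf_prob_Ball_ge)
    fix x
    assume "x \<in> {1..n} \<times> {1..n}"
    then show "measure_pmf.prob (sample_pmf n k m) {I. \<not> ?close x I} \<le> \<delta> / real n ^ 2"
      using sample_freq2_deviation_prob_le[of k n \<epsilon> \<delta> "fst x" "snd x"] assms(1-5)
      unfolding \<gamma>_def m_def by (auto simp: case_prod_beta not_le)
  qed simp
  then have "1 - \<delta> \<le> measure_pmf.prob (sample_pmf n k m) {I. \<forall>x \<in> {1..n} \<times> {1..n}. ?close x I}"
    using \<open>0 < n\<close> by (simp add: power2_eq_square)
  also have "\<dots> \<le> measure_pmf.prob (sample_pmf n k m) ?good"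
    using freq_bounds_of_pair_deviations[of k n m _ "\<epsilon> * \<gamma>"] assms(1,2)
    by (intro measure_pmf.finite_measure_mono) auto
  finally show ?thesis .
qed

end
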